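(* Let $\Sigma$ be a simply connected minimal surface in $\mathbb{R}^3$, parametrized (up to translations) by the conformal harmonic immersion \[ \mathbf{X}(\zeta)=\Big(\mathrm{Re}\int\phi_1(\zeta)\,d\zeta,\ \mathrm{Re}\int\phi_2(\zeta)\,d\zeta,\ \mathrm{Re}\int\phi_3(\zeta)\,d\zeta\Big), \] where $\zeta$ is a conformal coordinate and the holomorphic null curve $\phi=(\phi_1,\phi_2,\phi_3)$ is given in terms of Weierstrass data $(G(\zeta),\Psi(\zeta)\,d\zeta)$ by \[ \phi=\Big(\tfrac12(1-G^2)\Psi,\ \tfrac{i}{2}(1+G^2)\Psi,\ G\Psi\Big). \] For each $\theta\in(-\frac{\pi}{2},\frac{\pi}{2})$ define the holomorphic curve \[ \widetilde{\phi}=(\widetilde{\phi}_0,\widetilde{\phi}_1,\widetilde{\phi}_2,\widetilde{\phi}_3)=\Big(\frac{\sin\theta}{2}\Big(1+\frac{G^2}{\cos^2\theta}\Big)\Psi,\ \frac{\cos\theta}{2}\Big(1-\frac{G^2}{\cos^2\theta}\Big)\Psi,\ \frac{i}{2}\Big(1+\frac{G^2}{\cos^2\theta}\Big)\Psi,\ G\Psi\Big) \] (so that $\widetilde{\phi}_0=-i(\sin\theta)\,\widetilde{\phi}_2$). Then there exists a degenerate minimal surface $\Sigma^{\tan\theta}$ in $\mathbb{R}^4$, parametrized (up to translations) by the conformal harmonic immersion \[ \mathbf{X}^{\tan\theta}(\zeta)=\Big(\mathrm{Re}\int\widetilde{\phi}_0\,d\zeta,\ \mathrm{Re}\int\widetilde{\phi}_1\,d\zeta,\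 \mathrm{Re}\int\widetilde{\phi}_2\,d\zeta,\ \mathrm{Re}\int\widetilde{\phi}_3\,d\zeta\Big). \]
   Context: For a conformal harmonic immersion $\mathbf{X}:\Sigma\to\mathbb{R}^4$ with local conformal coordinate $\zeta$, its Gauss map is $\mathcal{G}(\zeta)=[\partial\mathbf{X}/\partial\zeta]\in\mathbb{CP}^3$, taking values in the quadric $\{z_0^2+z_1^2+z_2^2+z_3^2=0\}$. The minimal surface is called degenerate if the image of its Gauss map lies in a hyperplane of $\mathbb{CP}^3$. *)

theory Defs
  imports "HOL-Complex_Analysis.Complex_Analysis"
begin

definition harmonic_on :: "complex set \<Rightarrow> (complex \<Rightarrow> real) \<Rightarrow> bool" where
  "harmonic_on \<Omega> u \<longleftrightarrow> open \<Omega> \<and>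
     (\<exists>ux uy uxx uxy uyx uyy.
        (\<forall>z\<in>\<Omega>. (u has_derivative (\<lambda>h. Re h * ux z + Im h * uy z)) (at z)
               \<and> (ux has_derivative (\<lambda>h. Re h * uxx z + Im h * uxy z)) (at z)
               \<and> (uy has_derivative (\<lambda>h. Re h * uyx z + Im h * uyy z)) (at z)
               \<and> uxx z + uyy z = 0)
        \<and> continuous_on \<Omega> uxx \<and> continuous_on \<Omega> uxy
        \<and> continuous_on \<Omega> uyx \<and> continuous_on \<Omega> uyy)"

text \<open>Complex derivative dX/d zeta = (X_x - i X_y)/2, the representative of the Gauss map.\<close>
definition dzeta :: "(complex \<Rightarrow> real^'n) \<Rightarrow> complex \<Rightarrow> complex^'n" where
  "dzeta X z = (\<chi> k. (complex_of_real (frechet_derivative X (at z) 1 $ k)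
                       - \<i> * complex_of_real (frechet_derivative X (at z) \<i> $ k)) / 2)"

definition conformal_harmonic_immersion :: "complex set \<Rightarrow> (complex \<Rightarrow> real^'n) \<Rightarrow> bool" where
  "conformal_harmonic_immersion \<Omega> X \<longleftrightarrow> open \<Omega> \<and>
     (\<forall>z\<in>\<Omega>. X differentiable (at z)) \<and>
     (\<forall>k. harmonic_on \<Omega> (\<lambda>z. X z $ k)) \<and>
     (\<forall>z\<in>\<Omega>. norm (frechet_derivative X (at z) 1) = norm (frechet_derivative X (at z) \<i>)
             \<and> frechet_derivative X (at z) 1 \<bullet> frechet_derivative X (at z) \<i> = 0
             \<and> inj (frechet_derivative X (at z)))"

text \<open>X = Re \<integral> phi d zeta (up to translation): dX_k(z) h = Re (phi_k(z) h).\<close>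
definition re_integral_of :: "complex set \<Rightarrow> (complex \<Rightarrow> real^'n) \<Rightarrow> (complex \<Rightarrow> complex^'n) \<Rightarrow> bool" where
  "re_integral_of \<Omega> X \<phi> \<longleftrightarrow>
     (\<forall>z\<in>\<Omega>. \<forall>k. ((\<lambda>w. X w $ k) has_derivative (\<lambda>h. Re (\<phi> z $ k * h))) (at z))"

definition holomorphic_curve_on :: "(complex \<Rightarrow> complex^'n) \<Rightarrow> complex set \<Rightarrow> bool" where
  "holomorphic_curve_on \<phi> \<Omega> \<longleftrightarrow> (\<forall>k. (\<lambda>z. \<phi> z $ k) holomorphic_on \<Omega>)"

text \<open>Degenerate: the image of the Gauss map [dX/d zeta] lies in a hyperplane of CP^(n-1).\<close>
definition degenerate_on :: "complex set \<Rightarrow> (complex \<Rightarrow> real^'n) \<Rightarrow> bool" where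
  "degenerate_on \<Omega> X \<longleftrightarrow>
     (\<exists>a::complex^'n. a \<noteq> 0 \<and> (\<forall>z\<in>\<Omega>. (\<Sum>k\<in>UNIV. a $ k * dzeta X z $ k) = 0))"

end

theory Submission
  imports Defs
begin

text \<open>The curve \<open>\<phi>\<close> is replaced by a curve \<open>\<phi>'\<close> in \<open>\<complex>\<^sup>4\<close> that is linear in \<open>\<phi>\<close>:
  with \<open>p = \<phi>\<^sub>1 - i\<phi>\<^sub>2 = \<Psi>\<close> and \<open>q = \<phi>\<^sub>1 + i\<phi>\<^sub>2 = -G\<^sup>2\<Psi>\<close> its components are
  \<open>s(p - q/c\<^sup>2)/2, (cp + q/c)/2, i(p - q/c\<^sup>2)/2, \<phi>\<^sub>3\<close>, so it stays holomorphic at the poles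
  of \<open>G\<close>. When \<open>s\<^sup>2 + c\<^sup>2 = 1\<close> its sum of squares is \<open>pq + \<phi>\<^sub>3\<^sup>2\<close>, the sum of squares of
  \<open>\<phi>\<close>, which vanishes; and \<open>\<phi>'\<close> vanishes only where \<open>\<phi>\<close> does. On a simply connected domain
  a nowhere vanishing holomorphic null curve integrates to a conformal harmonic immersion, and
  the linear relation \<open>\<phi>'\<^sub>1 + is\<phi>'\<^sub>3 = 0\<close> confines its Gauss map to a hyperplane.\<close>

lemma has_derivative_vec_iff:
  fixes f :: "'a::real_normed_vector \<Rightarrow> real^'n"
  shows "(f has_derivative f') (at a) \<longleftrightarrow> (\<forall>i. ((\<lambda>x. f x $ i) has_derivative (\<lambda>h. f' h $ i)) (at a))"
  using has_derivative_componentwise_within[of f f' a UNIV]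
  by (simp add: Basis_vec_def inner_axis)

lemma re_integral_of_has_derivative:
  fixes X :: "complex \<Rightarrow> real^'n" and \<phi> :: "complex \<Rightarrow> complex^'n"
  assumes "re_integral_of \<Omega> X \<phi>" "z \<in> \<Omega>"
  shows "(X has_derivative (\<lambda>h. \<chi> k. Re (\<phi> z $ k * h))) (at z)"
  using assms unfolding re_integral_of_def by (simp add: has_derivative_vec_iff)

lemma re_integral_of_frechet_derivative:
  fixes X :: "complex \<Rightarrow> real^'n" and \<phi> :: "complex \<Rightarrow> complex^'n"
  assumes "re_integral_of \<Omega> X \<phi>" "z \<in> \<Omega>"
  shows "frechet_derivative X (at z) = (\<lambda>h. \<chi> k. Re (\<phi> z $ k * h))"
  using re_integral_of_has_derivative[OF assms] by (rule frechet_derivative_at[symmetric])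

lemma dzeta_re_integral_of:
  fixes X :: "complex \<Rightarrow> real^'n" and \<phi> :: "complex \<Rightarrow> complex^'n"
  assumes "re_integral_of \<Omega> X \<phi>" "z \<in> \<Omega>"
  shows "dzeta X z $ k = \<phi> z $ k / 2"
  unfolding dzeta_def re_integral_of_frechet_derivative[OF assms] by (simp add: complex_eq_iff)

lemma degenerate_on_re_integral_of:
  fixes X :: "complex \<Rightarrow> real^'n" and \<phi> :: "complex \<Rightarrow> complex^'n"
  assumes "re_integral_of \<Omega> X \<phi>" and "a \<noteq> 0"
    and "\<forall>z\<in>\<Omega>. (\<Sum>k\<in>UNIV. a $ k * \<phi> z $ k) = 0"
  shows "degenerate_on \<Omega> X"
  unfolding degenerate_on_def
proof (intro exI[of _ a] conjI ballI)
  fix z assume "z \<in> \<Omega>"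
  then have "(\<Sum>k\<in>UNIV. a $ k * dzeta X z $ k) = (\<Sum>k\<in>UNIV. a $ k * \<phi> z $ k) / 2"
    by (simp add: dzeta_re_integral_of[OF assms(1)] sum_divide_distrib)
  then show "(\<Sum>k\<in>UNIV. a $ k * dzeta X z $ k) = 0"
    using assms(3) \<open>z \<in> \<Omega>\<close> by simp
qed (fact \<open>a \<noteq> 0\<close>)

lemma sum_squares_eq_0_iff:
  fixes v :: "complex^'n"
  shows "(\<Sum>k\<in>UNIV. (v$k)\<^sup>2) = 0 \<longleftrightarrow>
     (\<Sum>k\<in>UNIV. (Re (v$k))\<^sup>2) = (\<Sum>k\<in>UNIV. (Im (v$k))\<^sup>2) \<and> (\<Sum>k\<in>UNIV. Re (v$k) * Im (v$k)) = 0"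
proof -
  have "Re (\<Sum>k\<in>UNIV. (v$k)\<^sup>2) = (\<Sum>k\<in>UNIV. (Re (v$k))\<^sup>2) - (\<Sum>k\<in>UNIV. (Im (v$k))\<^sup>2)"
    by (simp add: Re_sum power2_eq_square sum_subtractf)
  moreover have "Im (\<Sum>k\<in>UNIV. (v$k)\<^sup>2) = 2 * (\<Sum>k\<in>UNIV. Re (v$k) * Im (v$k))"
    by (simp add: Im_sum power2_eq_square sum_distrib_left ac_simps)
  ultimately show ?thesis by (simp add: complex_eq_iff)
qed

lemma conformal_Re_mult_iff:
  fixes v :: "complex^'n"
  defines "D \<equiv> \<lambda>h. \<chi> k. Re (v $ k * h)"
  shows "norm (D 1) = norm (D \<i>) \<and> D 1 \<bullet> D \<i> = 0 \<longleftrightarrow> (\<Sum>k\<in>UNIV. (v$k)\<^sup>2) = 0"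
proof -
  have "norm (D 1) = norm (D \<i>) \<longleftrightarrow> D 1 \<bullet> D 1 = D \<i> \<bullet> D \<i>"
    by (simp add: norm_eq_sqrt_inner)
  moreover have "D 1 \<bullet> D 1 = (\<Sum>k\<in>UNIV. (Re (v$k))\<^sup>2)"
    by (simp add: D_def inner_vec_def power2_eq_square)
  moreover have "D \<i> \<bullet> D \<i> = (\<Sum>k\<in>UNIV. (Im (v$k))\<^sup>2)"
    by (simp add: D_def inner_vec_def power2_eq_square)
  moreover have "D 1 \<bullet> D \<i> = - (\<Sum>k\<in>UNIV. Re (v$k) * Im (v$k))"
    by (simp add: D_def inner_vec_def sum_negf)
  ultimately show ?thesis by (simp add: sum_squares_eq_0_iff)
qed

lemma inj_Re_mult_iff:
  fixes v :: "complex^'n"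
  assumes null: "(\<Sum>k\<in>UNIV. (v$k)\<^sup>2) = 0"
  shows "inj (\<lambda>h. \<chi> k. Re (v $ k * h)) \<longleftrightarrow> v \<noteq> 0"
proof
  assume "inj (\<lambda>h. \<chi> k. Re (v $ k * h))"
  then show "v \<noteq> 0" by (auto dest: injD[of _ 1 0])
next
  assume v: "v \<noteq> 0"
  show "inj (\<lambda>h. \<chi> k. Re (v $ k * h))"
  proof (rule injI, rule ccontr)
    fix h1 h2 assume eq: "(\<chi> k. Re (v $ k * h1)) = (\<chi> k. Re (v $ k * h2))" and "h1 \<noteq> h2"
    define h where "h = h1 - h2"
    define w where "w = (\<chi> k. v$k * h)"
    have "h \<noteq> 0" using \<open>h1 \<noteq> h2\<close> by (simp add: h_def)
    have re_w: "Re (w$k) = 0" for k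
      using eq by (simp add: vec_eq_iff w_def h_def right_diff_distrib)
    have "(\<Sum>k\<in>UNIV. (w$k)\<^sup>2) = h\<^sup>2 * (\<Sum>k\<in>UNIV. (v$k)\<^sup>2)"
      by (simp add: w_def sum_distrib_left power_mult_distrib mult.commute)
    with null have "(\<Sum>k\<in>UNIV. (Im (w$k))\<^sup>2) = 0"
      using sum_squares_eq_0_iff[of w] re_w by simp
    then have "Im (w$k) = 0" for k
      by (simp add: sum_nonneg_eq_0_iff)
    with re_w have "w$k = 0" for k
      by (simp add: complex_eq_iff)
    then have "v$k = 0" for k
      using \<open>h \<noteq> 0\<close> by (simp add: w_def)
    with v show False by (simp add: vec_eq_iff)
  qed
qed

lemma conformal_harmonic_immersion_iff_null:
  fixes X :: "complex \<Rightarrow> real^'n" and \<phi> :: "complex \<Rightarrow> complex^'n"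
  assumes "open \<Omega>" and "re_integral_of \<Omega> X \<phi>" and "\<forall>k. harmonic_on \<Omega> (\<lambda>z. X z $ k)"
  shows "conformal_harmonic_immersion \<Omega> X \<longleftrightarrow>
           (\<forall>z\<in>\<Omega>. (\<Sum>k\<in>UNIV. (\<phi> z $ k)\<^sup>2) = 0 \<and> \<phi> z \<noteq> 0)"
proof -
  have pointwise:
    "norm (frechet_derivative X (at z) 1) = norm (frechet_derivative X (at z) \<i>)
       \<and> frechet_derivative X (at z) 1 \<bullet> frechet_derivative X (at z) \<i> = 0
       \<and> inj (frechet_derivative X (at z))
     \<longleftrightarrow> (\<Sum>k\<in>UNIV. (\<phi> z $ k)\<^sup>2) = 0 \<and> \<phi> z \<noteq> 0" if "z \<in> \<Omega>" for z
    unfolding re_integral_of_frechet_derivative[OF assms(2) that]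
    using conformal_Re_mult_iff[of "\<phi> z"] inj_Re_mult_iff[of "\<phi> z"] by blast
  have "X differentiable (at z)" if "z \<in> \<Omega>" for z
    using re_integral_of_has_derivative[OF assms(2) that] by (auto simp: differentiable_def)
  with assms(1,3) pointwise show ?thesis
    unfolding conformal_harmonic_immersion_def by blast
qed

lemma harmonic_on_Re_primitive:
  assumes "open \<Omega>" "f holomorphic_on \<Omega>" "\<And>z. z \<in> \<Omega> \<Longrightarrow> (F has_field_derivative f z) (at z)"
  shows "harmonic_on \<Omega> (\<lambda>z. Re (F z))"
proof -
  \<comment> \<open>Cauchy--Riemann: the partial derivatives of \<open>Re g\<close> are \<open>Re g'\<close> and \<open>-Im g'\<close>.\<close>
  have d_Re: "((\<lambda>w. Re (g w)) has_derivative (\<lambda>h. Re h * Re d + Im h * (- Im d))) (at z)"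
    if "(g has_field_derivative d) (at z)" for g d z
    using has_derivative_Re[OF that[unfolded has_field_derivative_def]]
    by (simp add: algebra_simps)
  have d_Im: "((\<lambda>w. - Im (g w)) has_derivative (\<lambda>h. Re h * (- Im d) + Im h * (- Re d))) (at z)"
    if "(g has_field_derivative d) (at z)" for g d z
    using has_derivative_minus[OF has_derivative_Im[OF that[unfolded has_field_derivative_def]]]
    by (simp add: algebra_simps)
  have f': "(f has_field_derivative deriv f z) (at z)" if "z \<in> \<Omega>" for z
    using assms(1,2) that holomorphic_derivI by blast
  have "continuous_on \<Omega> (deriv f)"
    using assms(1,2) holomorphic_deriv holomorphic_on_imp_continuous_on by blast
  show ?thesis
    unfolding harmonic_on_def
    apply (rule conjI[OF assms(1)])
    apply (rule exI[of _ "\<lambda>z. Re (f z)"], rule exI[of _ "\<lambda>z. - Im (f z)"])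
    apply (rule exI[of _ "\<lambda>z. Re (deriv f z)"], rule exI[of _ "\<lambda>z. - Im (deriv f z)"])
    apply (rule exI[of _ "\<lambda>z. - Im (deriv f z)"], rule exI[of _ "\<lambda>z. - Re (deriv f z)"])
    using d_Re d_Im assms(3) f' \<open>continuous_on \<Omega> (deriv f)\<close>
    by (auto intro!: continuous_intros)
qed

lemma re_integral_of_exists:
  fixes \<phi> :: "complex \<Rightarrow> complex^'n"
  assumes "open \<Omega>" and "simply_connected \<Omega>" and "holomorphic_curve_on \<phi> \<Omega>"
  obtains X :: "complex \<Rightarrow> real^'n"
  where "re_integral_of \<Omega> X \<phi>" and "\<forall>k. harmonic_on \<Omega> (\<lambda>z. X z $ k)"
proof -
  have hol: "(\<lambda>z. \<phi> z $ k) holomorphic_on \<Omega>" for k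
    using assms(3) by (simp add: holomorphic_curve_on_def)
  have "\<exists>F. \<forall>z. z \<in> \<Omega> \<longrightarrow> (F has_field_derivative \<phi> z $ k) (at z)" for k
    using assms(2)[unfolded simply_connected_eq_global_primitive[OF assms(1)]] hol by blast
  then obtain F where F: "\<And>k z. z \<in> \<Omega> \<Longrightarrow> (F k has_field_derivative \<phi> z $ k) (at z)"
    by metis
  show thesis
  proof
    show "re_integral_of \<Omega> (\<lambda>z. \<chi> k. Re (F k z)) \<phi>"
      unfolding re_integral_of_def
      using has_derivative_Re[OF F[unfolded has_field_derivative_def]]
      by (simp add: mult.commute)
    show "\<forall>k. harmonic_on \<Omega> (\<lambda>z. (\<chi> k. Re (F k z)) $ k)"
      using harmonic_on_Re_primitive[OF assms(1) hol F] by simp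
  qed
qed

definition tilt :: "complex \<Rightarrow> complex \<Rightarrow> complex^3 \<Rightarrow> complex^4" where
  "tilt s c v =
     (let p = v$1 - \<i> * v$2; q = v$1 + \<i> * v$2
      in \<chi> k. if k = 1 then s * (p - q / c\<^sup>2) / 2 else if k = 2 then (c * p + q / c) / 2
              else if k = 3 then \<i> * (p - q / c\<^sup>2) / 2 else v$3)"

lemma tilt_nth:
  "tilt s c v $ 1 = s * ((v$1 - \<i> * v$2) - (v$1 + \<i> * v$2) / c\<^sup>2) / 2"
  "tilt s c v $ 2 = (c * (v$1 - \<i> * v$2) + (v$1 + \<i> * v$2) / c) / 2"
  "tilt s c v $ 3 = \<i> * ((v$1 - \<i> * v$2) - (v$1 + \<i> * v$2) / c\<^sup>2) / 2"
  "tilt s c v $ 4 = v$3"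
  by (simp_all add: tilt_def Let_def)

lemma tilt_linear_relation: "tilt s c v $ 1 + \<i> * s * tilt s c v $ 3 = 0"
proof -
  have "s * X / 2 + \<i> * s * (\<i> * X / 2) = 0" for X :: complex
    by (simp add: field_simps)
  then show ?thesis unfolding tilt_nth by (simp only: mult.assoc)
qed

lemma sum_squares_tilt:
  fixes v :: "complex^3"
  assumes "s\<^sup>2 + c\<^sup>2 = 1" and "c \<noteq> 0"
  shows "(\<Sum>k\<in>UNIV. (tilt s c v $ k)\<^sup>2) = (\<Sum>k\<in>UNIV. (v $ k)\<^sup>2)"
proof -
  define p q where "p = v$1 - \<i> * v$2" and "q = v$1 + \<i> * v$2"
  define X where "X = p - q / c\<^sup>2"
  have "(tilt s c v $ 1)\<^sup>2 + (tilt s c v $ 3)\<^sup>2 = (s\<^sup>2 - 1) * X\<^sup>2 / 4"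
    unfolding tilt_nth p_def[symmetric] q_def[symmetric] X_def[symmetric]
    by (simp add: power_mult_distrib power_divide algebra_simps)
  also have "\<dots> = - (c * X)\<^sup>2 / 4"
    using assms(1) by (simp add: power_mult_distrib flip: eq_diff_eq)
  also have "c * X = c * p - q / c"
    using assms(2) by (simp add: X_def power2_eq_square field_simps)
  finally have "(tilt s c v $ 1)\<^sup>2 + (tilt s c v $ 2)\<^sup>2 + (tilt s c v $ 3)\<^sup>2
      = ((c * p + q / c)\<^sup>2 - (c * p - q / c)\<^sup>2) / 4"
    unfolding tilt_nth p_def[symmetric] q_def[symmetric]
    by (simp add: power_divide algebra_simps)
  also have "\<dots> = (v$1)\<^sup>2 + (v$2)\<^sup>2"
    using assms(2) by (simp add: p_def q_def power2_eq_square field_simps)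
  finally show ?thesis
    by (simp add: sum_4 sum_3 tilt_nth(4) algebra_simps)
qed

lemma tilt_eq_0_iff:
  fixes v :: "complex^3"
  assumes "c \<noteq> 0"
  shows "tilt s c v = 0 \<longleftrightarrow> v = 0"
proof
  define p q where "p = v$1 - \<i> * v$2" and "q = v$1 + \<i> * v$2"
  assume "tilt s c v = 0"
  then have "tilt s c v $ 2 = 0" "tilt s c v $ 3 = 0" "tilt s c v $ 4 = 0" by simp_all
  then have "c * p + q / c = 0" "p - q / c\<^sup>2 = 0" "v$3 = 0"
    unfolding tilt_nth p_def[symmetric] q_def[symmetric] by simp_all
  then have "c\<^sup>2 * p + q = 0" "q = c\<^sup>2 * p" "v$3 = 0"
    using assms by (simp_all add: field_simps power2_eq_square)
  then have "p = 0" "q = 0" "v$3 = 0" using assms by simp_all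
  then have "v$1 = 0" "v$2 = 0" "v$3 = 0"
    unfolding p_def q_def by (simp_all add: algebra_simps)
  then show "v = 0" by (metis exhaust_3 vec_eq_iff zero_index)
qed (auto simp: vec_eq_iff tilt_def)

lemma holomorphic_curve_on_tilt:
  fixes \<phi> :: "complex \<Rightarrow> complex^3"
  assumes "holomorphic_curve_on \<phi> \<Omega>" and "c \<noteq> 0"
  shows "holomorphic_curve_on (\<lambda>z. tilt s c (\<phi> z)) \<Omega>"
proof -
  have "(\<lambda>z. \<phi> z $ k) holomorphic_on \<Omega>" for k
    using assms(1) by (simp add: holomorphic_curve_on_def)
  then have "(\<lambda>z. tilt s c (\<phi> z) $ k) holomorphic_on \<Omega>" for k
    using exhaust_4[of k] assms(2) by (auto simp: tilt_nth intro!: holomorphic_intros)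
  then show ?thesis by (simp add: holomorphic_curve_on_def)
qed

lemma tilt_weierstrass:
  fixes v :: "complex^3"
  assumes "v$1 = (1 - g\<^sup>2) * \<psi> / 2" "v$2 = \<i> * (1 + g\<^sup>2) * \<psi> / 2" "v$3 = g * \<psi>"
    and "c \<noteq> 0"
  shows "tilt s c v $ 1 = s / 2 * (1 + g\<^sup>2 / c\<^sup>2) * \<psi>"
    and "tilt s c v $ 2 = c / 2 * (1 - g\<^sup>2 / c\<^sup>2) * \<psi>"
    and "tilt s c v $ 3 = \<i> / 2 * (1 + g\<^sup>2 / c\<^sup>2) * \<psi>"
    and "tilt s c v $ 4 = g * \<psi>"
proof -
  have "v$1 - \<i> * v$2 = \<psi>" "v$1 + \<i> * v$2 = - (g\<^sup>2 * \<psi>)"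
    unfolding assms(1,2) by (simp_all add: field_simps power2_eq_square)
  then show "tilt s c v $ 1 = s / 2 * (1 + g\<^sup>2 / c\<^sup>2) * \<psi>"
    and "tilt s c v $ 2 = c / 2 * (1 - g\<^sup>2 / c\<^sup>2) * \<psi>"
    and "tilt s c v $ 3 = \<i> / 2 * (1 + g\<^sup>2 / c\<^sup>2) * \<psi>"
    using assms(4) by (simp_all add: tilt_nth field_simps power2_eq_square)
qed (simp add: tilt_nth assms(3))

theorem corollary5p4:
  fixes \<Omega> :: "complex set"
    and X :: "complex \<Rightarrow> real^3"
    and \<phi> :: "complex \<Rightarrow> complex^3"
    and G \<Psi> :: "complex \<Rightarrow> complex"
    and \<theta> :: real
  assumes "open \<Omega>" and "connected \<Omega>" and "simply_connected \<Omega>"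
    and "G meromorphic_on \<Omega>" and "\<Psi> holomorphic_on \<Omega>"
    and "holomorphic_curve_on \<phi> \<Omega>"
    and "\<forall>z\<in>\<Omega>. G analytic_on {z} \<longrightarrow>
           \<phi> z $ 1 = (1 - (G z)\<^sup>2) * \<Psi> z / 2 \<and>
           \<phi> z $ 2 = \<i> * (1 + (G z)\<^sup>2) * \<Psi> z / 2 \<and>
           \<phi> z $ 3 = G z * \<Psi> z"
    and "conformal_harmonic_immersion \<Omega> X"
    and "re_integral_of \<Omega> X \<phi>"
    and "- (pi / 2) < \<theta>" and "\<theta> < pi / 2"
  shows "\<exists>(\<phi>' :: complex \<Rightarrow> complex^4) (X' :: complex \<Rightarrow> real^4).
           holomorphic_curve_on \<phi>' \<Omega> \<and>
           (\<forall>z\<in>\<Omega>. G analytic_on {z} \<longrightarrow>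
              \<phi>' z $ 1 = of_real (sin \<theta>) / 2 * (1 + (G z)\<^sup>2 / of_real ((cos \<theta>)\<^sup>2)) * \<Psi> z \<and>
              \<phi>' z $ 2 = of_real (cos \<theta>) / 2 * (1 - (G z)\<^sup>2 / of_real ((cos \<theta>)\<^sup>2)) * \<Psi> z \<and>
              \<phi>' z $ 3 = \<i> / 2 * (1 + (G z)\<^sup>2 / of_real ((cos \<theta>)\<^sup>2)) * \<Psi> z \<and>
              \<phi>' z $ 4 = G z * \<Psi> z) \<and>
           conformal_harmonic_immersion \<Omega> X' \<and>
           re_integral_of \<Omega> X' \<phi>' \<and>
           degenerate_on \<Omega> X'"
proof -
  define s c where "s = complex_of_real (sin \<theta>)" and "c = complex_of_real (cos \<theta>)"
  have "cos \<theta> > 0" using assms(10,11) by (intro cos_gt_zero_pi) auto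
  then have "c \<noteq> 0" by (simp add: c_def)
  have "s\<^sup>2 + c\<^sup>2 = 1"
    unfolding s_def c_def by (metis of_real_add of_real_1 of_real_power sin_cos_squared_add)
  define \<phi>' :: "complex \<Rightarrow> complex^4" where "\<phi>' = (\<lambda>z. tilt s c (\<phi> z))"
  have "\<forall>z\<in>\<Omega>. (\<Sum>k\<in>UNIV. (\<phi> z $ k)\<^sup>2) = 0 \<and> \<phi> z \<noteq> 0"
    using assms(8,9) conformal_harmonic_immersion_iff_null[OF assms(1,9)]
    by (simp add: conformal_harmonic_immersion_def)
  then have null': "\<forall>z\<in>\<Omega>. (\<Sum>k\<in>UNIV. (\<phi>' z $ k)\<^sup>2) = 0 \<and> \<phi>' z \<noteq> 0"
    using \<open>s\<^sup>2 + c\<^sup>2 = 1\<close> \<open>c \<noteq> 0\<close> by (simp add: \<phi>'_def sum_squares_tilt tilt_eq_0_iff)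
  have hol': "holomorphic_curve_on \<phi>' \<Omega>"
    unfolding \<phi>'_def using holomorphic_curve_on_tilt[OF assms(6) \<open>c \<noteq> 0\<close>] .
  obtain X' :: "complex \<Rightarrow> real^4"
    where X': "re_integral_of \<Omega> X' \<phi>'" "\<forall>k. harmonic_on \<Omega> (\<lambda>z. X' z $ k)"
    using re_integral_of_exists[OF assms(1,3) hol'] .
  have "conformal_harmonic_immersion \<Omega> X'"
    using conformal_harmonic_immersion_iff_null[OF assms(1) X'] null' by simp
  moreover have "degenerate_on \<Omega> X'"
  proof (rule degenerate_on_re_integral_of[OF X'(1)])
    let ?a = "\<chi> k::4. if k = 1 then 1 else if k = 3 then \<i> * s else 0"
    show "?a \<noteq> 0" by (auto simp: vec_eq_iff intro!: exI[of _ 1])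
    show "\<forall>z\<in>\<Omega>. (\<Sum>k\<in>UNIV. ?a $ k * \<phi>' z $ k) = 0"
      using tilt_linear_relation by (simp add: sum_4 \<phi>'_def mult.assoc)
  qed
  moreover have "complex_of_real ((cos \<theta>)\<^sup>2) = c\<^sup>2" by (simp add: c_def)
  ultimately show ?thesis
    using hol' X'(1) assms(7) tilt_weierstrass[OF _ _ _ \<open>c \<noteq> 0\<close>]
    by (auto simp: \<phi>'_def s_def c_def)
qed

end
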